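(* Let $p$ be a prime and $P=C_p\wr C_p$ (the regular wreath product of two cyclic groups of order $p$). Then $\eta_i(P)=Z_i(P)$ for all $i\ge 0$, where $Z_i(P)$ is the $i$-th term of the upper central series.
   Context: For a finite $p$-group $P$, a normal subgroup $N$ of $P$ is powerfully embedded in $P$ if $[N,P]\le N^p$ when $p$ is odd, and $[N,P]\le N^4$ when $p=2$ (here $N^{k}$ denotes the subgroup generated by all $k$-th powers of elements of $N$). $\eta(P)$ denotes the largest powerfully embedded subgroup of $P$ (the product of all powerfully embedded subgroups of $P$). The upper $\eta$-series of $P$ is defined by $\eta_0(P)=1$ and $\eta_{i+1}(P)/\eta_i(P)=\eta(P/\eta_i(P))$ for $i\ge 0$. *)

theory Defs
  imports "HOL-Algebra.Algebra"
begin

definition comm_subgroup :: "('a,'b) monoid_scheme \<Rightarrow> 'a set \<Rightarrow> 'a set \<Rightarrow> 'a set" where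
  "comm_subgroup G N H = generate G
     (\<Union>x\<in>N. \<Union>y\<in>H. {inv\<^bsub>G\<^esub> x \<otimes>\<^bsub>G\<^esub> inv\<^bsub>G\<^esub> y \<otimes>\<^bsub>G\<^esub> x \<otimes>\<^bsub>G\<^esub> y})"

definition power_subgroup :: "('a,'b) monoid_scheme \<Rightarrow> 'a set \<Rightarrow> nat \<Rightarrow> 'a set" where
  "power_subgroup G N k = generate G ((\<lambda>x. x [^]\<^bsub>G\<^esub> k) ` N)"

definition powerfully_embedded :: "nat \<Rightarrow> ('a,'b) monoid_scheme \<Rightarrow> 'a set \<Rightarrow> bool" where
  "powerfully_embedded p G N \<longleftrightarrow> N \<lhd> G \<and>
     comm_subgroup G N (carrier G) \<subseteq> power_subgroup G N (if p = 2 then 4 else p)"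

definition eta :: "nat \<Rightarrow> ('a,'b) monoid_scheme \<Rightarrow> 'a set" where
  "eta p G = generate G (\<Union>{N. powerfully_embedded p G N})"

fun eta_series :: "nat \<Rightarrow> ('a,'b) monoid_scheme \<Rightarrow> nat \<Rightarrow> 'a set" where
  "eta_series p G 0 = {\<one>\<^bsub>G\<^esub>}"
| "eta_series p G (Suc i) =
     {x \<in> carrier G. eta_series p G i #>\<^bsub>G\<^esub> x \<in> eta p (G Mod eta_series p G i)}"

definition center :: "('a,'b) monoid_scheme \<Rightarrow> 'a set" where
  "center G = {x \<in> carrier G. \<forall>y\<in>carrier G. x \<otimes>\<^bsub>G\<^esub> y = y \<otimes>\<^bsub>G\<^esub> x}"

fun upper_central :: "('a,'b) monoid_scheme \<Rightarrow> nat \<Rightarrow> 'a set" where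
  "upper_central G 0 = {\<one>\<^bsub>G\<^esub>}"
| "upper_central G (Suc i) =
     {x \<in> carrier G. upper_central G i #>\<^bsub>G\<^esub> x \<in> center (G Mod upper_central G i)}"

text \<open>The regular wreath product C_p wr C_p = (C_p)^p \<rtimes> C_p, with C_p = Z/pZ realised
  as {0..<p} under addition mod p; the base group is the group of functions
  {0..<p} \<rightarrow> {0..<p}, and the top group acts by regular (cyclic shift) permutation of
  coordinates: (f,a)(g,b) = (f + a.g, a+b) where (a.g)(i) = g(i+a).\<close>
definition wreath_Cp :: "nat \<Rightarrow> ((nat \<Rightarrow> nat) \<times> nat) monoid" where
  "wreath_Cp p = \<lparr> carrier = ({..<p} \<rightarrow>\<^sub>E {..<p}) \<times> {..<p},
     monoid.mult = (\<lambda>(f,a) (g,b). ((\<lambda>i\<in>{..<p}. (f i + g ((i + a) mod p)) mod p), (a + b) mod p)),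
     one = ((\<lambda>i\<in>{..<p}. 0), 0) \<rparr>"

end

theory Submission
  imports Defs
begin

text \<open>In \<open>W = C\<^sub>p wr C\<^sub>p\<close> every \<open>p\<close>-th power lies in the diagonal \<open>D\<close> of constant base
  vectors, which is central; for \<open>p = 2\<close> this even gives \<open>x\<^sup>4 = 1\<close>. So for \<open>i \<ge> 1\<close> (and for all
  \<open>i\<close> when \<open>p = 2\<close>) the quotient \<open>W/Z\<^sub>i\<close> has exponent dividing \<open>p\<close> (resp. 4), and in such a
  group a powerfully embedded \<open>N\<close> satisfies \<open>[N,G] \<le> N\<^sup>p = 1\<close>, so \<open>\<eta>\<close> is the centre.
  The remaining case is \<open>\<eta>(W)\<close> for odd \<open>p\<close>: there \<open>[N,W] \<le> N\<^sup>p \<le> D\<close>, but an element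
  outside the base group does not commute with the unit vector \<open>e\<^sub>0\<close> modulo \<open>D\<close>. Hence \<open>N\<close> lies in
  the base group, which has exponent \<open>p\<close>, and \<open>N\<close> is central again.\<close>

lemma (in group) mult_inv_cancel_left [simp]:
  "x \<in> carrier G \<Longrightarrow> y \<in> carrier G \<Longrightarrow> x \<otimes> (inv x \<otimes> y) = y"
  "x \<in> carrier G \<Longrightarrow> y \<in> carrier G \<Longrightarrow> inv x \<otimes> (x \<otimes> y) = y"
  by (simp_all flip: m_assoc)

lemma (in group) mult_commutator:
  assumes "x \<in> carrier G" "y \<in> carrier G"
  shows "y \<otimes> x \<otimes> (inv x \<otimes> inv y \<otimes> x \<otimes> y) = x \<otimes> y"
  using assms by (simp add: m_assoc)

lemma (in group) commute_if_commutator_eq_one: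
  assumes "x \<in> carrier G" "y \<in> carrier G" "inv x \<otimes> inv y \<otimes> x \<otimes> y = \<one>"
  shows "x \<otimes> y = y \<otimes> x"
  using mult_commutator[OF assms(1,2)] assms by simp

lemma (in group) center_subgroup: "subgroup (center G) G"
proof (rule subgroupI)
  show "center G \<subseteq> carrier G" "center G \<noteq> {}"
    by (auto simp: center_def)
next
  fix a assume "a \<in> center G"
  then have a: "a \<in> carrier G" "\<And>y. y \<in> carrier G \<Longrightarrow> a \<otimes> y = y \<otimes> a"
    by (auto simp: center_def)
  have "inv a \<otimes> y = y \<otimes> inv a" if y: "y \<in> carrier G" for y
  proof -
    have "inv a \<otimes> y = inv a \<otimes> (y \<otimes> a) \<otimes> inv a"
      using a(1) y by (simp add: m_assoc)
    also have "\<dots> = y \<otimes> inv a"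
      using a(1) y by (simp add: m_assoc flip: a(2))
    finally show ?thesis .
  qed
  then show "inv a \<in> center G" using a by (simp add: center_def)
next
  fix a b assume "a \<in> center G" "b \<in> center G"
  then have a: "a \<in> carrier G" "\<And>y. y \<in> carrier G \<Longrightarrow> a \<otimes> y = y \<otimes> a"
    and b: "b \<in> carrier G" "\<And>y. y \<in> carrier G \<Longrightarrow> b \<otimes> y = y \<otimes> b"
    by (auto simp: center_def)
  have "a \<otimes> b \<otimes> y = y \<otimes> (a \<otimes> b)" if y: "y \<in> carrier G" for y
  proof -
    have "a \<otimes> b \<otimes> y = a \<otimes> (b \<otimes> y)" using a(1) b(1) y by (simp add: m_assoc)
    also have "\<dots> = a \<otimes> (y \<otimes> b)" by (simp only: b(2)[OF y])
    also have "\<dots> = a \<otimes> y \<otimes> b" using a(1) b(1) y by (simp add: m_assoc)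
    also have "\<dots> = y \<otimes> a \<otimes> b" by (simp only: a(2)[OF y])
    also have "\<dots> = y \<otimes> (a \<otimes> b)" using a(1) b(1) y by (simp add: m_assoc)
    finally show ?thesis .
  qed
  with a(1) b(1) show "a \<otimes> b \<in> center G" by (simp add: center_def)
qed

lemma (in group) center_normal: "center G \<lhd> G"
  unfolding normal_inv_iff
proof (intro conjI center_subgroup ballI)
  fix x h assume "x \<in> carrier G" "h \<in> center G"
  moreover from this have "x \<otimes> h \<otimes> inv x = h"
    by (simp add: center_def m_assoc)
  ultimately show "x \<otimes> h \<otimes> inv x \<in> center G" by simp
qed

lemma (in group) center_powerfully_embedded: "powerfully_embedded p G (center G)"
proof -
  have "comm_subgroup G (center G) (carrier G) \<subseteq> {\<one>}"
    unfolding comm_subgroup_def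
  proof (rule generate_subgroup_incl[OF _ triv_subgroup], clarify)
    fix x y assume "x \<in> center G" "y \<in> carrier G"
    then show "inv x \<otimes> inv y \<otimes> x \<otimes> y = \<one>"
      by (simp add: center_def m_assoc)
  qed
  moreover have "\<one> \<in> power_subgroup G (center G) k" for k
    unfolding power_subgroup_def by (rule generate.one)
  ultimately show ?thesis
    unfolding powerfully_embedded_def using center_normal by blast
qed

lemma (in group) power_subgroup_subset:
  assumes "subgroup K G" "\<And>x. x \<in> N \<Longrightarrow> x [^] k \<in> K"
  shows "power_subgroup G N k \<subseteq> K"
  unfolding power_subgroup_def using assms by (intro generate_subgroup_incl) auto

lemma (in group) powerfully_embedded_commutators_subset:
  assumes "powerfully_embedded p G N" "subgroup K G"
    and "\<And>x. x \<in> N \<Longrightarrow> x [^] (if p = 2 then 4 else p) \<in> K"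
  shows "comm_subgroup G N (carrier G) \<subseteq> K"
  using assms power_subgroup_subset unfolding powerfully_embedded_def by blast

lemma (in group) powerfully_embedded_subset_center:
  assumes pe: "powerfully_embedded p G N"
    and pow: "\<And>x. x \<in> N \<Longrightarrow> x [^] (if p = 2 then 4 else p) = \<one>"
  shows "N \<subseteq> center G"
proof
  fix x assume x: "x \<in> N"
  have N: "N \<subseteq> carrier G"
    using pe normal_imp_subgroup subgroup.subset unfolding powerfully_embedded_def by blast
  have comm: "comm_subgroup G N (carrier G) \<subseteq> {\<one>}"
    using powerfully_embedded_commutators_subset[OF pe triv_subgroup] pow by simp
  have "x \<otimes> y = y \<otimes> x" if y: "y \<in> carrier G" for y
  proof (rule commute_if_commutator_eq_one)
    have "inv x \<otimes> inv y \<otimes> x \<otimes> y \<in> comm_subgroup G N (carrier G)"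
      unfolding comm_subgroup_def using x y by (intro generate.incl) blast
    with comm show "inv x \<otimes> inv y \<otimes> x \<otimes> y = \<one>" by blast
  qed (use x y N in auto)
  with x N show "x \<in> center G" by (auto simp: center_def)
qed

lemma (in group) eta_eq_center:
  assumes "\<And>N. powerfully_embedded p G N \<Longrightarrow> N \<subseteq> center G"
  shows "eta p G = center G"
proof
  show "eta p G \<subseteq> center G"
    unfolding eta_def using assms by (intro generate_subgroup_incl center_subgroup) blast
  show "center G \<subseteq> eta p G"
    unfolding eta_def using center_powerfully_embedded by (blast intro: generate.incl)
qed

lemma (in group) eta_eq_center_if_exponent:
  assumes "\<And>x. x \<in> carrier G \<Longrightarrow> x [^] (if p = 2 then 4 else p) = \<one>"
  shows "eta p G = center G"
proof (rule eta_eq_center)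
  fix N assume pe: "powerfully_embedded p G N"
  then have "N \<subseteq> carrier G"
    using normal_imp_subgroup subgroup.subset unfolding powerfully_embedded_def by blast
  with pe assms show "N \<subseteq> center G"
    by (intro powerfully_embedded_subset_center) auto
qed

lemma (in normal) group_hom_rcos: "group_hom G (G Mod H) (\<lambda>x. H #> x)"
  by (intro group_hom.intro group_hom_axioms.intro is_group factorgroup_is_group r_coset_hom_Mod)

lemma (in group_hom) normal_vimage:
  assumes "N \<lhd> H"
  shows "{x \<in> carrier G. h x \<in> N} \<lhd> G"
proof -
  interpret N: normal N H by (rule assms)
  show ?thesis
    unfolding G.normal_inv_iff
  proof (intro conjI ballI G.subgroupI)
    fix x n assume "x \<in> carrier G" "n \<in> {x \<in> carrier G. h x \<in> N}"
    then show "x \<otimes> n \<otimes> inv x \<in> {x \<in> carrier G. h x \<in> N}"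
      using N.inv_op_closed2 by simp
  qed (auto simp: N.subgroup_axioms subgroup.m_inv_closed)
qed

lemma (in group_hom) hom_center:
  assumes "h ` carrier G = carrier H" "x \<in> center G"
  shows "h x \<in> center H"
  using assms by (force simp: center_def simp flip: hom_mult)

lemma (in group) upper_central_normal: "upper_central G i \<lhd> G"
proof (induction i)
  case 0
  show ?case by (simp add: normal_inv_iff triv_subgroup)
next
  case (Suc i)
  then interpret Z: normal "upper_central G i" G .
  show ?case
    using group_hom.normal_vimage[OF Z.group_hom_rcos group.center_normal[OF Z.factorgroup_is_group]]
    by simp
qed

lemma (in group) center_subset_upper_central: "center G \<subseteq> upper_central G (Suc i)"
proof
  fix x assume x: "x \<in> center G"
  interpret Z: normal "upper_central G i" G by (rule upper_central_normal)
  have "upper_central G i #> x \<in> center (G Mod upper_central G i)"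
    by (rule group_hom.hom_center[OF Z.group_hom_rcos]) (use x in \<open>auto simp: carrier_FactGroup\<close>)
  with x show "x \<in> upper_central G (Suc i)" by (simp add: center_def)
qed

lemma (in normal) eta_FactGroup_eq_center:
  assumes "\<And>x. x \<in> carrier G \<Longrightarrow> x [^] (if p = 2 then 4 else p) \<in> H"
  shows "eta p (G Mod H) = center (G Mod H)"
proof (rule group.eta_eq_center_if_exponent[OF factorgroup_is_group])
  fix C assume "C \<in> carrier (G Mod H)"
  then obtain x where "x \<in> carrier G" "C = H #> x" by (auto simp: carrier_FactGroup)
  then show "C [^]\<^bsub>G Mod H\<^esub> (if p = 2 then 4 else p) = \<one>\<^bsub>G Mod H\<^esub>"
    using assms by (simp add: FactGroup_pow rcos_const)
qed

lemma mod_add_left_cancel_nat: "((a::nat) + b) mod n = (a + c) mod n \<longleftrightarrow> b mod n = c mod n"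
  by (simp add: nat_mod_eq_iff)

lemma mod_complement_add: "(c::nat) < p \<Longrightarrow> ((p - c) mod p + c) mod p = 0"
  by (cases "c = 0") auto

lemma wreath_Cp_carrier: "carrier (wreath_Cp p) = ({..<p} \<rightarrow>\<^sub>E {..<p}) \<times> {..<p}"
  by (simp add: wreath_Cp_def)

lemma wreath_Cp_one: "\<one>\<^bsub>wreath_Cp p\<^esub> = ((\<lambda>i\<in>{..<p}. 0), 0)"
  by (simp add: wreath_Cp_def)

lemma wreath_Cp_mult:
  "(f, a) \<otimes>\<^bsub>wreath_Cp p\<^esub> (g, b) =
     ((\<lambda>i\<in>{..<p}. (f i + g ((i + a) mod p)) mod p), (a + b) mod p)"
  by (simp add: wreath_Cp_def)

lemma wreath_Cp_group:
  assumes p: "0 < p"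
  shows "group (wreath_Cp p)"
proof (rule groupI)
  fix x y assume "x \<in> carrier (wreath_Cp p)" "y \<in> carrier (wreath_Cp p)"
  then show "x \<otimes>\<^bsub>wreath_Cp p\<^esub> y \<in> carrier (wreath_Cp p)"
    using p by (cases x, cases y) (auto simp: wreath_Cp_carrier wreath_Cp_mult)
next
  show "\<one>\<^bsub>wreath_Cp p\<^esub> \<in> carrier (wreath_Cp p)"
    using p by (auto simp: wreath_Cp_carrier wreath_Cp_one)
next
  fix x y z :: "(nat \<Rightarrow> nat) \<times> nat"
  obtain f a g b h c where "x = (f, a)" "y = (g, b)" "z = (h, c)"
    by (cases x, cases y, cases z)
  moreover have "(i + (a + b) mod p) mod p = ((i + a) mod p + b) mod p" for i
    by (simp add: mod_simps add.assoc)
  ultimately show "x \<otimes>\<^bsub>wreath_Cp p\<^esub> y \<otimes>\<^bsub>wreath_Cp p\<^esub> z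
      = x \<otimes>\<^bsub>wreath_Cp p\<^esub> (y \<otimes>\<^bsub>wreath_Cp p\<^esub> z)"
    using p by (auto simp: wreath_Cp_mult mod_simps add.assoc intro!: ext)
next
  fix x assume "x \<in> carrier (wreath_Cp p)"
  then show "\<one>\<^bsub>wreath_Cp p\<^esub> \<otimes>\<^bsub>wreath_Cp p\<^esub> x = x"
    by (cases x) (auto simp: wreath_Cp_carrier wreath_Cp_one wreath_Cp_mult PiE_iff
        extensional_def intro!: ext)
next
  fix x assume x: "x \<in> carrier (wreath_Cp p)"
  obtain f a where xe: "x = (f, a)" by (cases x)
  define b where "b = (p - a) mod p"
  define g where "g = (\<lambda>i\<in>{..<p}. (p - f ((i + b) mod p)) mod p)"
  have f: "f i < p" if "i < p" for i
    using x that by (auto simp: xe wreath_Cp_carrier)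
  have "(g, b) \<in> carrier (wreath_Cp p)"
    using p by (auto simp: wreath_Cp_carrier g_def b_def)
  moreover have "(g, b) \<otimes>\<^bsub>wreath_Cp p\<^esub> x = \<one>\<^bsub>wreath_Cp p\<^esub>"
  proof -
    have "((p - f ((i + b) mod p)) mod p + f ((i + b) mod p)) mod p = 0" for i
      using f[of "(i + b) mod p"] p by (simp add: mod_complement_add)
    moreover have "(b + a) mod p = 0"
      using x p by (auto simp: xe wreath_Cp_carrier b_def mod_simps)
    ultimately show ?thesis
      by (auto simp: xe wreath_Cp_mult wreath_Cp_one g_def intro!: ext)
  qed
  ultimately show "\<exists>y\<in>carrier (wreath_Cp p). y \<otimes>\<^bsub>wreath_Cp p\<^esub> x = \<one>\<^bsub>wreath_Cp p\<^esub>"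
    by blast
qed

lemma wreath_Cp_pow:
  "(f, a) [^]\<^bsub>wreath_Cp p\<^esub> n =
     ((\<lambda>i\<in>{..<p}. (\<Sum>j<n. f ((i + j * a) mod p)) mod p), (n * a) mod p)"
proof (induction n)
  case 0
  then show ?case by (auto simp: wreath_Cp_one intro!: ext)
next
  case (Suc n)
  have "(i + (n * a) mod p) mod p = (i + n * a) mod p" for i
    by (simp add: mod_simps)
  moreover have "((n * a) mod p + a) mod p = (a + n * a) mod p"
    by (simp add: mod_simps add.commute)
  ultimately show ?case
    by (auto simp: Suc wreath_Cp_mult mod_simps add.commute intro!: ext)
qed

lemma sum_affine_mod_prime:
  fixes p :: nat
  assumes p: "Factorial_Ring.prime p" and a: "\<not> p dvd a"
  shows "(\<Sum>j<p. f ((i + j * a) mod p)) = (\<Sum>k<p. f k)"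
proof -
  define h where "h j = (i + j * a) mod p" for j
  have inj: "inj_on h {..<p}"
  proof (rule inj_onI)
    have False if "u < v" "v < p" "h u = h v" for u v
    proof -
      have "p dvd (v - u) * a"
        using that mod_eq_dvd_iff_nat[of "i + u * a" "i + v * a" p]
        by (simp add: h_def diff_mult_distrib)
      then have "p dvd v - u \<or> p dvd a"
        using p prime_dvd_mult_iff by blast
      with that a show False by (auto dest: dvd_imp_le)
    qed
    then show "u = v" if "u \<in> {..<p}" "v \<in> {..<p}" "h u = h v" for u v
      using that by (metis lessThan_iff linorder_neqE_nat)
  qed
  moreover have "h ` {..<p} \<subseteq> {..<p}"
    using p by (auto simp: h_def prime_gt_0_nat)
  ultimately have "h ` {..<p} = {..<p}"
    by (simp add: endo_inj_surj)
  then have "(\<Sum>k<p. f k) = sum f (h ` {..<p})" by simp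
  also have "\<dots> = (\<Sum>j<p. f (h j))" using inj by (simp add: sum.reindex)
  finally show ?thesis by (simp add: h_def)
qed

definition wreath_Cp_diagonal :: "nat \<Rightarrow> ((nat \<Rightarrow> nat) \<times> nat) set" where
  "wreath_Cp_diagonal p = {((\<lambda>i\<in>{..<p}. c), 0) | c. c < p}"

lemma wreath_Cp_diagonal_subgroup:
  assumes p: "0 < p"
  shows "subgroup (wreath_Cp_diagonal p) (wreath_Cp p)"
proof -
  interpret group "wreath_Cp p" by (rule wreath_Cp_group[OF p])
  have diagonal: "((\<lambda>i\<in>{..<p}. c mod p), 0) \<in> wreath_Cp_diagonal p" for c
    using p by (auto simp: wreath_Cp_diagonal_def)
  show ?thesis
  proof (rule subgroupI)
    show "wreath_Cp_diagonal p \<subseteq> carrier (wreath_Cp p)"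
      by (auto simp: wreath_Cp_diagonal_def wreath_Cp_carrier split: if_splits)
    then show "inv\<^bsub>wreath_Cp p\<^esub> k \<in> wreath_Cp_diagonal p" if k: "k \<in> wreath_Cp_diagonal p" for k
    proof -
      obtain c where c: "k = ((\<lambda>i\<in>{..<p}. c), 0)" "c < p"
        using k by (auto simp: wreath_Cp_diagonal_def)
      have "((\<lambda>i\<in>{..<p}. (p - c) mod p), 0) \<otimes>\<^bsub>wreath_Cp p\<^esub> k = \<one>\<^bsub>wreath_Cp p\<^esub>"
        using c by (auto simp: wreath_Cp_mult wreath_Cp_one mod_complement_add intro!: ext)
      then have "inv\<^bsub>wreath_Cp p\<^esub> k = ((\<lambda>i\<in>{..<p}. (p - c) mod p), 0)"
        using diagonal k \<open>wreath_Cp_diagonal p \<subseteq> carrier (wreath_Cp p)\<close>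
        by (intro inv_equality) auto
      then show ?thesis using diagonal by simp
    qed
  next
    show "wreath_Cp_diagonal p \<noteq> {}" using p by (auto simp: wreath_Cp_diagonal_def)
  next
    fix k l assume "k \<in> wreath_Cp_diagonal p" "l \<in> wreath_Cp_diagonal p"
    then obtain c d where "k = ((\<lambda>i\<in>{..<p}. c), 0)" "l = ((\<lambda>i\<in>{..<p}. d), 0)"
      by (auto simp: wreath_Cp_diagonal_def)
    then have "k \<otimes>\<^bsub>wreath_Cp p\<^esub> l = ((\<lambda>i\<in>{..<p}. (c + d) mod p), 0)"
      using p by (auto simp: wreath_Cp_mult intro!: ext)
    then show "k \<otimes>\<^bsub>wreath_Cp p\<^esub> l \<in> wreath_Cp_diagonal p" using diagonal by simp
  qed
qed

lemma wreath_Cp_diagonal_subset_center: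
  "wreath_Cp_diagonal p \<subseteq> center (wreath_Cp p)"
proof
  fix k assume "k \<in> wreath_Cp_diagonal p"
  then obtain c where k: "k = ((\<lambda>i\<in>{..<p}. c), 0)" "c < p"
    by (auto simp: wreath_Cp_diagonal_def)
  have "k \<otimes>\<^bsub>wreath_Cp p\<^esub> y = y \<otimes>\<^bsub>wreath_Cp p\<^esub> k" if y: "y \<in> carrier (wreath_Cp p)" for y
  proof -
    obtain g b where "y = (g, b)" "b < p" using y by (cases y) (auto simp: wreath_Cp_carrier)
    then show ?thesis by (simp add: k wreath_Cp_mult add.commute cong: restrict_cong)
  qed
  then show "k \<in> center (wreath_Cp p)"
    using k by (auto simp: center_def wreath_Cp_carrier)
qed

lemma wreath_Cp_pow_base_eq_one: "(f, 0) [^]\<^bsub>wreath_Cp p\<^esub> p = \<one>\<^bsub>wreath_Cp p\<^esub>"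
  by (auto simp: wreath_Cp_pow wreath_Cp_one intro!: ext)

lemma wreath_Cp_pow_prime_diagonal:
  assumes p: "Factorial_Ring.prime p" and x: "x \<in> carrier (wreath_Cp p)"
  shows "x [^]\<^bsub>wreath_Cp p\<^esub> p \<in> wreath_Cp_diagonal p"
proof -
  have p0: "0 < p" using p prime_gt_0_nat by blast
  obtain f a where xe: "x = (f, a)" "a < p" using x by (cases x) (auto simp: wreath_Cp_carrier)
  show ?thesis
  proof (cases "a = 0")
    case True
    then show ?thesis
      using p0 by (auto simp: xe wreath_Cp_pow_base_eq_one wreath_Cp_diagonal_def wreath_Cp_one)
  next
    case False
    with xe(2) have "\<not> p dvd a" by (auto dest: dvd_imp_le)
    then have "\<forall>i. (\<Sum>j<p. f ((i + j * a) mod p)) = (\<Sum>k<p. f k)"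
      using sum_affine_mod_prime[OF p] by blast
    then have "x [^]\<^bsub>wreath_Cp p\<^esub> p = ((\<lambda>i\<in>{..<p}. (\<Sum>k<p. f k) mod p), 0)"
      by (auto simp: xe wreath_Cp_pow intro!: ext)
    then show ?thesis using p0 by (auto simp: wreath_Cp_diagonal_def)
  qed
qed

lemma wreath_Cp_pow_four:
  assumes "x \<in> carrier (wreath_Cp 2)"
  shows "x [^]\<^bsub>wreath_Cp 2\<^esub> (4::nat) = \<one>\<^bsub>wreath_Cp 2\<^esub>"
proof -
  interpret group "wreath_Cp 2" by (rule wreath_Cp_group) simp
  obtain c where c: "x [^]\<^bsub>wreath_Cp 2\<^esub> (2::nat) = ((\<lambda>i\<in>{..<2}. c), 0)"
    using wreath_Cp_pow_prime_diagonal[OF _ assms] by (auto simp: wreath_Cp_diagonal_def)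
  have "x [^]\<^bsub>wreath_Cp 2\<^esub> (4::nat)
      = (x [^]\<^bsub>wreath_Cp 2\<^esub> (2::nat)) [^]\<^bsub>wreath_Cp 2\<^esub> (2::nat)"
    using nat_pow_pow[OF assms, of 2 2] by simp
  also have "\<dots> = \<one>\<^bsub>wreath_Cp 2\<^esub>"
    unfolding c(1) by (rule wreath_Cp_pow_base_eq_one)
  finally show ?thesis .
qed

lemma wreath_Cp_pow_upper_central:
  assumes p: "Factorial_Ring.prime p" and i: "p = 2 \<or> 0 < i"
    and x: "x \<in> carrier (wreath_Cp p)"
  shows "x [^]\<^bsub>wreath_Cp p\<^esub> (if p = 2 then 4 else p) \<in> upper_central (wreath_Cp p) i"
proof -
  interpret group "wreath_Cp p" using p by (simp add: wreath_Cp_group prime_gt_0_nat)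
  show ?thesis
  proof (cases "p = 2")
    case True
    then show ?thesis
      using wreath_Cp_pow_four x normal_imp_subgroup[OF upper_central_normal, THEN subgroup.one_closed]
      by simp
  next
    case False
    with i obtain j where "i = Suc j" using gr0_conv_Suc by auto
    with False show ?thesis
      using wreath_Cp_pow_prime_diagonal[OF p x] wreath_Cp_diagonal_subset_center
        center_subset_upper_central
      by auto
  qed
qed

definition wreath_Cp_unit_vector :: "nat \<Rightarrow> (nat \<Rightarrow> nat) \<times> nat" where
  "wreath_Cp_unit_vector p = ((\<lambda>i\<in>{..<p}. if i = 0 then 1 else 0), 0)"

lemma wreath_Cp_unit_vector_carrier: "2 \<le> p \<Longrightarrow> wreath_Cp_unit_vector p \<in> carrier (wreath_Cp p)"
  by (auto simp: wreath_Cp_unit_vector_def wreath_Cp_carrier)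

lemma wreath_Cp_commute_unit_mod_diagonal:
  assumes p: "Factorial_Ring.prime p" "p \<noteq> 2"
    and x: "x \<in> carrier (wreath_Cp p)" and k: "k \<in> wreath_Cp_diagonal p"
    and comm: "x \<otimes>\<^bsub>wreath_Cp p\<^esub> wreath_Cp_unit_vector p
      = wreath_Cp_unit_vector p \<otimes>\<^bsub>wreath_Cp p\<^esub> x \<otimes>\<^bsub>wreath_Cp p\<^esub> k"
  shows "snd x = 0"
proof (rule ccontr)
  assume top: "snd x \<noteq> 0"
  have p2: "2 < p" using p prime_ge_2_nat by (metis le_neq_implies_less)
  obtain f a where xe: "x = (f, a)" "a < p" using x by (cases x) (auto simp: wreath_Cp_carrier)
  obtain c where kc: "k = ((\<lambda>i\<in>{..<p}. c), 0)" "c < p"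
    using k by (auto simp: wreath_Cp_diagonal_def)
  \<comment> \<open>Coordinate \<open>p - a\<close> of \<open>comm\<close> forces \<open>c = 1\<close>, then coordinate \<open>0\<close> forces \<open>2 \<equiv> 0 (mod p)\<close>.\<close>
  have coord: "(f i + (if (i + a) mod p = 0 then 1 else 0)) mod p
      = (((if i = 0 then 1 else 0) + f i) mod p + c) mod p" if "i < p" for i
    using fun_cong[OF arg_cong[OF comm, of fst], of i] that p2
    by (simp add: xe kc wreath_Cp_unit_vector_def wreath_Cp_mult)
  have "(f (p - a) + 1) mod p = (f (p - a) + c) mod p"
    using coord[of "p - a"] top xe by (simp add: mod_simps)
  then have "c = 1"
    using kc(2) p2 by (simp only: mod_add_left_cancel_nat) simp
  with coord[of 0] top xe p2 have "(f 0 + 2) mod p = (f 0 + 0) mod p"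
    by (simp add: mod_simps add.commute)
  then have "2 mod p = 0"
    by (simp only: mod_add_left_cancel_nat) simp
  with p2 show False by simp
qed

lemma wreath_Cp_eta_FactGroup_trivial:
  assumes p: "Factorial_Ring.prime p" "p \<noteq> 2"
  defines "Q \<equiv> wreath_Cp p Mod {\<one>\<^bsub>wreath_Cp p\<^esub>}"
  shows "eta p Q = center Q"
proof -
  let ?W = "wreath_Cp p" and ?\<pi> = "\<lambda>x. {\<one>\<^bsub>wreath_Cp p\<^esub>} #>\<^bsub>wreath_Cp p\<^esub> x"
  interpret W: group ?W using p(1) by (simp add: wreath_Cp_group prime_gt_0_nat)
  interpret normal "{\<one>\<^bsub>?W\<^esub>}" ?W by (simp add: W.normal_inv_iff W.triv_subgroup)
  interpret \<pi>: group_hom ?W Q ?\<pi> unfolding Q_def by (rule group_hom_rcos)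
  have \<pi>_singleton: "?\<pi> x = {x}" if "x \<in> carrier ?W" for x
    using that by (auto simp: r_coset_def)
  have Q: "carrier Q = ?\<pi> ` carrier ?W" by (simp add: Q_def carrier_FactGroup)
  let ?D = "?\<pi> ` wreath_Cp_diagonal p"
  have D: "subgroup ?D Q"
    using p(1) by (intro \<pi>.subgroup_img_is_subgroup wreath_Cp_diagonal_subgroup prime_gt_0_nat)
  have D_carrier: "wreath_Cp_diagonal p \<subseteq> carrier ?W"
    using wreath_Cp_diagonal_subset_center by (auto simp: center_def)
  show ?thesis
  proof (rule \<pi>.H.eta_eq_center)
    fix N assume pe: "powerfully_embedded p Q N"
    then have N: "N \<subseteq> carrier Q"
      using normal_imp_subgroup subgroup.subset unfolding powerfully_embedded_def by blast
    have "comm_subgroup Q N (carrier Q) \<subseteq> ?D"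
    proof (rule \<pi>.H.powerfully_embedded_commutators_subset[OF pe D])
      fix z assume "z \<in> N"
      with N Q obtain x where "x \<in> carrier ?W" "z = ?\<pi> x" by blast
      then show "z [^]\<^bsub>Q\<^esub> (if p = 2 then 4 else p) \<in> ?D"
        using p wreath_Cp_pow_prime_diagonal by (auto simp flip: \<pi>.hom_nat_pow)
    qed
    \<comment> \<open>\<open>N\<close> lies in the base group: \<open>[x, e\<^sub>0] \<in> D\<close> fails for \<open>x\<close> outside it.\<close>
    have base: "snd x = 0" if x: "x \<in> carrier ?W" "?\<pi> x \<in> N" for x
    proof -
      let ?u = "wreath_Cp_unit_vector p"
      have u: "?u \<in> carrier ?W" using p(1) prime_ge_2_nat wreath_Cp_unit_vector_carrier by blast
      let ?c = "inv\<^bsub>?W\<^esub> x \<otimes>\<^bsub>?W\<^esub> inv\<^bsub>?W\<^esub> ?u \<otimes>\<^bsub>?W\<^esub> x \<otimes>\<^bsub>?W\<^esub> ?u"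
      have "?\<pi> ?c \<in> comm_subgroup Q N (carrier Q)"
        unfolding comm_subgroup_def using x u Q
        by (auto simp: \<pi>.hom_mult \<pi>.hom_inv intro!: generate.incl)
      with \<open>comm_subgroup Q N (carrier Q) \<subseteq> ?D\<close> obtain k
        where k: "k \<in> wreath_Cp_diagonal p" "?\<pi> ?c = ?\<pi> k" by blast
      moreover have "?c \<in> carrier ?W" "k \<in> carrier ?W" using x(1) u k(1) D_carrier by auto
      ultimately have "?c = k" by (simp add: \<pi>_singleton)
      then have "x \<otimes>\<^bsub>?W\<^esub> ?u = ?u \<otimes>\<^bsub>?W\<^esub> x \<otimes>\<^bsub>?W\<^esub> k"
        using W.mult_commutator[OF x(1) u] by simp
      with p x(1) k(1) show ?thesis by (rule wreath_Cp_commute_unit_mod_diagonal)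
    qed
    show "N \<subseteq> center Q"
    proof (rule \<pi>.H.powerfully_embedded_subset_center[OF pe])
      fix z assume "z \<in> N"
      with N Q obtain x where x: "x \<in> carrier ?W" "z = ?\<pi> x" by blast
      with base \<open>z \<in> N\<close> obtain f where "x = (f, 0)" by (cases x) auto
      with x p show "z [^]\<^bsub>Q\<^esub> (if p = 2 then 4 else p) = \<one>\<^bsub>Q\<^esub>"
        by (simp add: wreath_Cp_pow_base_eq_one flip: \<pi>.hom_nat_pow)
    qed
  qed
qed

theorem lemma3p1:
  fixes p :: nat
  assumes "Factorial_Ring.prime p"
  shows "\<forall>i. eta_series p (wreath_Cp p) i = upper_central (wreath_Cp p) i"
proof -
  let ?W = "wreath_Cp p"
  interpret W: group ?W using assms by (simp add: wreath_Cp_group prime_gt_0_nat)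
  have eta_quotient:
    "eta p (?W Mod upper_central ?W i) = center (?W Mod upper_central ?W i)" for i
  proof (cases "p = 2 \<or> 0 < i")
    case True
    interpret normal "upper_central ?W i" ?W by (rule W.upper_central_normal)
    show ?thesis
      using wreath_Cp_pow_upper_central[OF assms True]
      by (rule eta_FactGroup_eq_center)
  next
    case False
    then show ?thesis using wreath_Cp_eta_FactGroup_trivial[OF assms] by simp
  qed
  show ?thesis
  proof
    fix i show "eta_series p ?W i = upper_central ?W i"
      by (induction i) (simp_all add: eta_quotient)
  qed
qed

end
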